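(* If $W$ is a 1-planar graph on at most six vertices, then $W$ is either of class $\mathcal C_0$ or of class $\mathcal C_2$.
   Context: All graphs are finite, simple and undirected. A drawing is 1-planar if each edge is crossed at most once (adjacent edges never cross, no edge crosses itself); a graph is 1-planar if it has such a drawing. For a 1-planar drawing $D$, $D^\times$ is the plane graph obtained by turning each crossing into a new degree-4 vertex (a false vertex); $N_{D^\times}(c)$ is the neighbour set of a false vertex $c$. A 1-planar graph is of class $\mathcal C_0$ if it has a 1-planar drawing with $|N_{D^\times}(c_1)\cap N_{D^\times}(c_2)|=0$ for all distinct false vertices; for $i\in\{1,2\}$ it is of class $\mathcal C_i$ if it is not of class $\mathcal C_k$ for any $k<i$ and it has a 1-planar drawing with $|N_{D^\times}(c_1)\cap N_{D^\times}(c_2)|\le i$ for all distinct false vertices $c_1,c_2$. *)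

theory Defs
  imports "HOL-Analysis.Analysis"
begin

definition simple_graph :: "'a set \<Rightarrow> 'a set set \<Rightarrow> bool" where
  "simple_graph V E \<longleftrightarrow> finite V \<and>
     (\<forall>e\<in>E. \<exists>u v. u \<in> V \<and> v \<in> V \<and> u \<noteq> v \<and> e = {u, v})"

definition drawing :: "'a set \<Rightarrow> 'a set set \<Rightarrow> ('a \<Rightarrow> complex) \<Rightarrow> ('a set \<Rightarrow> real \<Rightarrow> complex) \<Rightarrow> bool" where
  "drawing V E p \<gamma> \<longleftrightarrow> inj_on p V \<and>
     (\<forall>e\<in>E. arc (\<gamma> e) \<and> {pathstart (\<gamma> e), pathfinish (\<gamma> e)} = p ` e \<and>
        (\<forall>w\<in>V. p w \<in> path_image (\<gamma> e) \<longrightarrow> w \<in> e))"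

definition cr :: "'a set \<Rightarrow> ('a \<Rightarrow> complex) \<Rightarrow> ('a set \<Rightarrow> real \<Rightarrow> complex) \<Rightarrow> 'a set \<Rightarrow> 'a set \<Rightarrow> complex set" where
  "cr V p \<gamma> e f = (path_image (\<gamma> e) \<inter> path_image (\<gamma> f)) - p ` V"

definition one_planar_drawing :: "'a set \<Rightarrow> 'a set set \<Rightarrow> ('a \<Rightarrow> complex) \<Rightarrow> ('a set \<Rightarrow> real \<Rightarrow> complex) \<Rightarrow> bool" where
  "one_planar_drawing V E p \<gamma> \<longleftrightarrow> drawing V E p \<gamma> \<and>
     (\<forall>e\<in>E. \<forall>f\<in>E. e \<noteq> f \<and> e \<inter> f \<noteq> {} \<longrightarrow> cr V p \<gamma> e f = {}) \<and>
     (\<forall>e\<in>E. \<forall>f\<in>E. \<forall>g\<in>E. \<forall>x y. f \<noteq> e \<and> g \<noteq> e \<and> x \<in> cr V p \<gamma> e f \<and> y \<in> cr V p \<gamma> e g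
         \<longrightarrow> f = g \<and> x = y)"

definition one_planar :: "'a set \<Rightarrow> 'a set set \<Rightarrow> bool" where
  "one_planar V E \<longleftrightarrow> (\<exists>p \<gamma>. one_planar_drawing V E p \<gamma>)"

text \<open>In D^x, a false vertex c arising from the crossing of edges e and f has
  neighbour set e \<union> f. Distinct false vertices correspond to distinct crossing pairs.
  The bound k says that any two distinct false vertices share at most k neighbours.\<close>
definition crossing_bound :: "'a set \<Rightarrow> 'a set set \<Rightarrow> ('a \<Rightarrow> complex) \<Rightarrow> ('a set \<Rightarrow> real \<Rightarrow> complex) \<Rightarrow> nat \<Rightarrow> bool" where
  "crossing_bound V E p \<gamma> k \<longleftrightarrow>
     (\<forall>e\<in>E. \<forall>f\<in>E. \<forall>g\<in>E. \<forall>h\<in>E.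
        e \<noteq> f \<and> g \<noteq> h \<and> cr V p \<gamma> e f \<noteq> {} \<and> cr V p \<gamma> g h \<noteq> {} \<and> {e, f} \<noteq> {g, h}
        \<longrightarrow> card ((e \<union> f) \<inter> (g \<union> h)) \<le> k)"

definition has_drawing_bound :: "'a set \<Rightarrow> 'a set set \<Rightarrow> nat \<Rightarrow> bool" where
  "has_drawing_bound V E k \<longleftrightarrow> (\<exists>p \<gamma>. one_planar_drawing V E p \<gamma> \<and> crossing_bound V E p \<gamma> k)"

definition class_C0 :: "'a set \<Rightarrow> 'a set set \<Rightarrow> bool" where
  "class_C0 V E \<longleftrightarrow> has_drawing_bound V E 0"

definition class_C1 :: "'a set \<Rightarrow> 'a set set \<Rightarrow> bool" where
  "class_C1 V E \<longleftrightarrow> \<not> class_C0 V E \<and> has_drawing_bound V E 1"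

definition class_C2 :: "'a set \<Rightarrow> 'a set set \<Rightarrow> bool" where
  "class_C2 V E \<longleftrightarrow> \<not> class_C0 V E \<and> \<not> class_C1 V E \<and> has_drawing_bound V E 2"

end

theory Submission
  imports Defs
begin

text \<open>
  The six points of \<open>k6_point\<close> carry a straight-line drawing of \<open>K\<^sub>6\<close> with exactly three
  crossings, between the edge pairs \<open>01/25\<close>, \<open>04/35\<close> and \<open>13/24\<close>; no edge is crossed twice
  and any two of the crossings share exactly two of their four endpoints. Restricting this drawing
  along an injection of the vertex set into \<open>{0..5}\<close> gives every simple graph on at most six
  vertices a 1-planar drawing in which two false vertices share at most two neighbours. Conversely, in any 1-planar drawing the two edges of a
  crossing are disjoint, so each false vertex has four neighbours, and two such 4-sets inside a set
  of at most six vertices meet in at least two vertices. Hence a bound of 1 forces the bound 0, and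
  none of these graphs is of class \<open>class_C1\<close>.
\<close>

definition cross :: "complex \<Rightarrow> complex \<Rightarrow> real" where
  "cross u v = Re u * Im v - Im u * Re v"

lemma cross_add_right: "cross w (z + z') = cross w z + cross w z'"
  by (simp add: cross_def algebra_simps)

lemma cross_diff_right: "cross w (z - z') = cross w z - cross w z'"
  by (simp add: cross_def algebra_simps)

lemma cross_scaleR_right: "cross w (c *\<^sub>R z) = c * cross w z"
  by (simp add: cross_def algebra_simps)

lemma cross_self [simp]: "cross w w = 0"
  by (simp add: cross_def)

lemma closed_segment_offset:
  assumes "x \<in> closed_segment a b"
  obtains u where "0 \<le> u" "u \<le> 1" "x - a = u *\<^sub>R (b - a)"
proof -
  from assms obtain u where "0 \<le> u" "u \<le> 1" "x = (1 - u) *\<^sub>R a + u *\<^sub>R b"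
    unfolding in_segment by blast
  moreover from this(3) have "x - a = u *\<^sub>R (b - a)"
    by (simp add: algebra_simps)
  ultimately show thesis using that by blast
qed

lemma cross_closed_segment_eq_0:
  assumes "x \<in> closed_segment a b"
  shows "cross (b - a) (x - a) = 0"
  using assms by (elim closed_segment_offset) (simp add: cross_scaleR_right)

lemma convex_combination_same_sign_neq_0:
  fixes \<alpha> \<beta> u :: real
  assumes "0 \<le> u" "u \<le> 1" "0 < \<alpha> * \<beta>"
  shows "(1 - u) * \<alpha> + u * \<beta> \<noteq> 0"
proof -
  have "\<alpha> < 0 \<and> \<beta> < 0 \<or> -\<alpha> < 0 \<and> -\<beta> < 0"
    using assms(3) by (auto simp: zero_less_mult_iff)
  then show ?thesis
  proof
    assume "\<alpha> < 0 \<and> \<beta> < 0"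
    then have "(1 - u) * \<alpha> + u * \<beta> < 0"
      using assms(1,2) by (intro convex_bound_lt) auto
    then show ?thesis by simp
  next
    assume "-\<alpha> < 0 \<and> -\<beta> < 0"
    then have "(1 - u) * -\<alpha> + u * -\<beta> < 0"
      using assms(1,2) by (intro convex_bound_lt) auto
    then show ?thesis by simp
  qed
qed

lemma closed_segments_disjoint_same_side:
  assumes "0 < cross (b - a) (c - a) * cross (b - a) (d - a)"
  shows "closed_segment a b \<inter> closed_segment c d = {}"
proof (rule ccontr)
  assume "closed_segment a b \<inter> closed_segment c d \<noteq> {}"
  then obtain x where ab: "x \<in> closed_segment a b" and cd: "x \<in> closed_segment c d"
    by blast
  from cd obtain u where u: "0 \<le> u" "u \<le> 1" "x - c = u *\<^sub>R (d - c)"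
    by (rule closed_segment_offset)
  have "x - a = (1 - u) *\<^sub>R (c - a) + u *\<^sub>R (d - a)"
    using u(3) by (simp add: algebra_simps)
  then have "(1 - u) * cross (b - a) (c - a) + u * cross (b - a) (d - a) = 0"
    using cross_closed_segment_eq_0 [OF ab] by (simp add: cross_add_right cross_scaleR_right)
  with u(1,2) assms show False
    by (blast dest: convex_combination_same_sign_neq_0)
qed

lemma closed_segments_Int_subsingleton:
  assumes "cross (b - a) (d - c) \<noteq> 0"
    and "x \<in> closed_segment a b \<inter> closed_segment c d" "y \<in> closed_segment a b \<inter> closed_segment c d"
  shows "x = y"
proof -
  obtain s where s: "x - c = s *\<^sub>R (d - c)"
    using closed_segment_offset [OF IntD2 [OF assms(2)]] by metis
  obtain t where t: "y - c = t *\<^sub>R (d - c)"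
    using closed_segment_offset [OF IntD2 [OF assms(3)]] by metis
  have "x - y = (x - c) - (y - c)" by simp
  also have "\<dots> = (s - t) *\<^sub>R (d - c)"
    by (simp add: s t scaleR_diff_left)
  finally have xy: "x - y = (s - t) *\<^sub>R (d - c)" .
  have "x - y = (x - a) - (y - a)" by simp
  then have "cross (b - a) (x - y) = 0"
    using cross_closed_segment_eq_0 [OF IntD1 [OF assms(2)]]
      cross_closed_segment_eq_0 [OF IntD1 [OF assms(3)]]
    by (simp add: cross_diff_right)
  with xy have "s = t"
    using assms(1) by (simp add: cross_scaleR_right)
  with xy show ?thesis by simp
qed

lemma closed_segments_common_end_Int:
  assumes "cross (a - w) (b - w) \<noteq> 0"
  shows "closed_segment w a \<inter> closed_segment w b \<subseteq> {w}"
proof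
  fix x assume x: "x \<in> closed_segment w a \<inter> closed_segment w b"
  obtain t where t: "x - w = t *\<^sub>R (b - w)"
    using closed_segment_offset [OF IntD2 [OF x]] by metis
  have "t * cross (a - w) (b - w) = 0"
    using cross_closed_segment_eq_0 [OF IntD1 [OF x]] by (simp add: t cross_scaleR_right)
  with assms t show "x \<in> {w}" by simp
qed

lemma list_all_upt_iff: "list_all P [0..<n] \<longleftrightarrow> (\<forall>i<n. P i)"
  by (auto simp: list_all_iff)

definition k6_x :: "nat \<Rightarrow> int" where "k6_x k = [5, 4, 2, 8, 6, 5] ! k"
definition k6_y :: "nat \<Rightarrow> int" where "k6_y k = [0, 2, 3, 8, 4, 1] ! k"

definition k6_point :: "nat \<Rightarrow> complex" where
  "k6_point k = Complex (of_int (k6_x k)) (of_int (k6_y k))"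

abbreviation k6_segment :: "nat \<Rightarrow> nat \<Rightarrow> complex set" where
  "k6_segment i j \<equiv> closed_segment (k6_point i) (k6_point j)"

definition k6_det :: "nat \<Rightarrow> nat \<Rightarrow> nat \<Rightarrow> nat \<Rightarrow> int" where
  "k6_det a b c d = (k6_x b - k6_x a) * (k6_y d - k6_y c) - (k6_y b - k6_y a) * (k6_x d - k6_x c)"

lemma cross_k6_point:
  "cross (k6_point b - k6_point a) (k6_point d - k6_point c) = of_int (k6_det a b c d)"
  by (simp add: cross_def k6_point_def k6_det_def)

definition k6_crossings :: "nat set set set" where
  "k6_crossings = {{{0, 1}, {2, 5}}, {{0, 4}, {3, 5}}, {{1, 3}, {2, 4}}}"

text \<open>Membership in \<open>k6_crossings\<close> in a form that \<open>code_simp\<close> evaluates quickly; deciding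
  equality of sets of sets directly is far too slow for the exhaustive checks below.\<close>

lemma k6_crossings_iff:
  "{{i, j}, {k, l}} \<in> k6_crossings \<longleftrightarrow>
     list_ex (\<lambda>(a, b, c, d). ({i, j} = {a, b} \<and> {k, l} = {c, d}) \<or> ({i, j} = {c, d} \<and> {k, l} = {a, b}))
       [(0, 1, 2, 5), (0, 4, 3, 5), (1, 3, 2, 4)]"
  unfolding k6_crossings_def by (auto simp: doubleton_eq_iff)

lemma k6_general_position:
  assumes "a < 6" "b < 6" "c < 6" "distinct [a, b, c]"
  shows "k6_det a b a c \<noteq> 0"
proof -
  have "list_all (\<lambda>a. list_all (\<lambda>b. list_all (\<lambda>c.
      distinct [a, b, c] \<longrightarrow> k6_det a b a c \<noteq> 0) [0..<6]) [0..<6]) [0..<6]"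
    unfolding k6_det_def k6_x_def k6_y_def by code_simp
  from this [unfolded list_all_upt_iff, rule_format] show ?thesis
    using assms by blast
qed

lemma k6_noncrossing_separated:
  assumes "i < 6" "j < 6" "k < 6" "l < 6" "distinct [i, j, k, l]" "{{i, j}, {k, l}} \<notin> k6_crossings"
  shows "0 < k6_det i j i k * k6_det i j i l \<or> 0 < k6_det k l k i * k6_det k l k j"
proof -
  have "list_all (\<lambda>i. list_all (\<lambda>j. list_all (\<lambda>k. list_all (\<lambda>l.
      distinct [i, j, k, l] \<and> {{i, j}, {k, l}} \<notin> k6_crossings \<longrightarrow>
      0 < k6_det i j i k * k6_det i j i l \<or> 0 < k6_det k l k i * k6_det k l k j)
      [0..<6]) [0..<6]) [0..<6]) [0..<6]"
    unfolding k6_det_def k6_x_def k6_y_def k6_crossings_iff doubleton_eq_iff by code_simp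
  from this [unfolded list_all_upt_iff, rule_format] show ?thesis
    using assms by blast
qed

lemma k6_crossing_nonparallel:
  assumes "{{i, j}, {k, l}} \<in> k6_crossings"
  shows "k6_det i j k l \<noteq> 0"
proof -
  have "list_all (\<lambda>i. list_all (\<lambda>j. list_all (\<lambda>k. list_all (\<lambda>l.
      {{i, j}, {k, l}} \<in> k6_crossings \<longrightarrow> k6_det i j k l \<noteq> 0)
      [0..<6]) [0..<6]) [0..<6]) [0..<6]"
    unfolding k6_det_def k6_x_def k6_y_def k6_crossings_iff doubleton_eq_iff by code_simp
  moreover have "i < 6 \<and> j < 6 \<and> k < 6 \<and> l < 6"
    using assms unfolding k6_crossings_def by (auto simp: doubleton_eq_iff)
  ultimately show ?thesis
    using assms unfolding list_all_upt_iff by blast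
qed

lemma k6_point_notin_segment:
  assumes "a < 6" "b < 6" "c < 6" "distinct [a, b, c]"
  shows "k6_point c \<notin> k6_segment a b"
  using cross_closed_segment_eq_0 [of "k6_point c" "k6_point a" "k6_point b"]
    k6_general_position [OF assms]
  by (auto simp: cross_k6_point)

lemma inj_on_k6_point: "inj_on k6_point {..<6}"
proof (rule inj_onI)
  fix a b :: nat
  assume ab: "a \<in> {..<6}" "b \<in> {..<6}" "k6_point a = k6_point b"
  show "a = b"
  proof (rule ccontr)
    assume "a \<noteq> b"
    define c :: nat where "c = (if 0 \<notin> {a, b} then 0 else if 1 \<notin> {a, b} then 1 else 2)"
    have "c < 6" "distinct [c, b, a]"
      using \<open>a \<noteq> b\<close> by (auto simp: c_def)
    then have "k6_point a \<notin> k6_segment c b"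
      using ab(1,2) k6_point_notin_segment by auto
    with ab(3) show False by simp
  qed
qed

lemma k6_segments_common_end:
  assumes "a < 6" "b < 6" "c < 6" "distinct [a, b, c]"
  shows "k6_segment a b \<inter> k6_segment a c \<subseteq> {k6_point a}"
  using closed_segments_common_end_Int k6_general_position [OF assms]
  by (simp add: cross_k6_point)

lemma k6_segments_disjoint:
  assumes "i < 6" "j < 6" "k < 6" "l < 6" "distinct [i, j, k, l]" "{{i, j}, {k, l}} \<notin> k6_crossings"
  shows "k6_segment i j \<inter> k6_segment k l = {}"
  using k6_noncrossing_separated [OF assms]
    closed_segments_disjoint_same_side
      [where a = "k6_point i" and b = "k6_point j" and c = "k6_point k" and d = "k6_point l"]
    closed_segments_disjoint_same_side
      [where a = "k6_point k" and b = "k6_point l" and c = "k6_point i" and d = "k6_point j"]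
  by (auto simp: cross_k6_point zero_less_mult_iff)

lemma k6_segments_cross_once:
  assumes "{{i, j}, {k, l}} \<in> k6_crossings"
    and "x \<in> k6_segment i j \<inter> k6_segment k l" "y \<in> k6_segment i j \<inter> k6_segment k l"
  shows "x = y"
  using closed_segments_Int_subsingleton [OF _ assms(2,3)] k6_crossing_nonparallel [OF assms(1)]
  by (simp add: cross_k6_point)

lemma k6_crossings_disjoint:
  assumes "A \<in> k6_crossings" "B \<in> k6_crossings" "A \<noteq> B"
  shows "A \<inter> B = {}"
  using assms unfolding k6_crossings_def
  by (simp add: doubleton_eq_iff; elim disjE; simp add: doubleton_eq_iff)

lemma k6_crossings_share_at_most_2:
  assumes "A \<in> k6_crossings" "B \<in> k6_crossings" "A \<noteq> B"
  shows "card (\<Union>A \<inter> \<Union>B) \<le> 2"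
  using assms unfolding k6_crossings_def by auto

text \<open>Orienting the segment from the smaller to the larger label makes it a function of the edge.\<close>

definition k6_path :: "('a \<Rightarrow> nat) \<Rightarrow> 'a set \<Rightarrow> real \<Rightarrow> complex" where
  "k6_path h e = linepath (k6_point (Min (h ` e))) (k6_point (Max (h ` e)))"

lemma k6_path_doubleton:
  "k6_path h {u, v} = linepath (k6_point (h u)) (k6_point (h v)) \<or>
   k6_path h {u, v} = linepath (k6_point (h v)) (k6_point (h u))"
  by (cases "h u \<le> h v") (simp_all add: k6_path_def min_def max_def)

locale k6_subdrawing =
  fixes V :: "'a set" and E :: "'a set set" and h :: "'a \<Rightarrow> nat"
  assumes simple: "simple_graph V E"
    and inj: "inj_on h V"
    and below_6: "h ` V \<subseteq> {..<6}"
begin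

lemma edgeE:
  assumes "e \<in> E"
  obtains u v where "u \<in> V" "v \<in> V" "u \<noteq> v" "e = {u, v}"
  using assms simple unfolding simple_graph_def by blast

lemma edge_subset: "e \<in> E \<Longrightarrow> e \<subseteq> V"
  by (elim edgeE) auto

lemma less_6: "v \<in> V \<Longrightarrow> h v < 6"
  using below_6 by auto

lemma edge_image_eq_iff: "e \<in> E \<Longrightarrow> f \<in> E \<Longrightarrow> h ` e = h ` f \<longleftrightarrow> e = f"
  using inj_on_image_eq_iff [OF inj] edge_subset by blast

lemma k6_path_edge:
  assumes "u \<in> V" "v \<in> V" "u \<noteq> v"
  shows "arc (k6_path h {u, v})"
    and "{pathstart (k6_path h {u, v}), pathfinish (k6_path h {u, v})} = (k6_point \<circ> h) ` {u, v}"
    and "path_image (k6_path h {u, v}) = k6_segment (h u) (h v)"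
proof -
  have "k6_point (h u) \<noteq> k6_point (h v)"
    using assms less_6 inj_on_k6_point inj by (auto dest: inj_onD)
  then show "arc (k6_path h {u, v})"
    using k6_path_doubleton [of h u v] by auto
  show "{pathstart (k6_path h {u, v}), pathfinish (k6_path h {u, v})} = (k6_point \<circ> h) ` {u, v}"
    using k6_path_doubleton [of h u v] by auto
  show "path_image (k6_path h {u, v}) = k6_segment (h u) (h v)"
    using k6_path_doubleton [of h u v] by (auto simp: closed_segment_commute)
qed

lemma cr_edges:
  assumes "u \<in> V" "v \<in> V" "u \<noteq> v" "u' \<in> V" "v' \<in> V" "u' \<noteq> v'"
  shows "cr V (k6_point \<circ> h) (k6_path h) {u, v} {u', v'} =
    k6_segment (h u) (h v) \<inter> k6_segment (h u') (h v') - (k6_point \<circ> h) ` V"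
  using assms by (simp add: cr_def k6_path_edge(3))

lemma drawing: "drawing V E (k6_point \<circ> h) (k6_path h)"
  unfolding drawing_def
proof (intro conjI ballI impI)
  show "inj_on (k6_point \<circ> h) V"
    using inj inj_on_subset [OF inj_on_k6_point below_6] by (rule comp_inj_on)
next
  fix e assume "e \<in> E"
  then obtain u v where uv: "u \<in> V" "v \<in> V" "u \<noteq> v" "e = {u, v}"
    by (rule edgeE)
  show "arc (k6_path h e)" "{pathstart (k6_path h e), pathfinish (k6_path h e)} = (k6_point \<circ> h) ` e"
    using k6_path_edge [OF uv(1-3)] uv(4) by simp_all
  fix w assume "w \<in> V" "(k6_point \<circ> h) w \<in> path_image (k6_path h e)"
  then show "w \<in> e"
    using k6_path_edge(3) [OF uv(1-3)] k6_point_notin_segment [of "h u" "h v" "h w"]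
      uv less_6 inj by (auto dest: inj_onD)
qed

lemma crossing_edges:
  assumes "e \<in> E" "f \<in> E" "e \<noteq> f" "cr V (k6_point \<circ> h) (k6_path h) e f \<noteq> {}"
  shows "e \<inter> f = {}" and "{h ` e, h ` f} \<in> k6_crossings"
proof -
  obtain u v where uv: "u \<in> V" "v \<in> V" "u \<noteq> v" "e = {u, v}"
    using assms(1) by (rule edgeE)
  obtain u' v' where uv': "u' \<in> V" "v' \<in> V" "u' \<noteq> v'" "f = {u', v'}"
    using assms(2) by (rule edgeE)
  note cr = cr_edges [OF uv(1-3) uv'(1-3), folded uv(4) uv'(4)]
  show disj: "e \<inter> f = {}"
  proof (rule ccontr)
    assume "e \<inter> f \<noteq> {}"
    then obtain w a b where wab: "e = {w, a}" "f = {w, b}" "distinct [w, a, b]" "w \<in> V" "a \<in> V" "b \<in> V"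
      using uv uv' assms(3) by (auto simp: doubleton_eq_iff)
    have "k6_segment (h w) (h a) \<inter> k6_segment (h w) (h b) \<subseteq> {k6_point (h w)}"
      using wab less_6 inj by (intro k6_segments_common_end) (auto dest: inj_onD)
    then have "cr V (k6_point \<circ> h) (k6_path h) e f = {}"
      using cr_edges [OF wab(4,5) _ wab(4,6)] wab by auto
    with assms(4) show False ..
  qed
  have "{{h u, h v}, {h u', h v'}} \<in> k6_crossings"
  proof (rule ccontr)
    assume "{{h u, h v}, {h u', h v'}} \<notin> k6_crossings"
    then have "k6_segment (h u) (h v) \<inter> k6_segment (h u') (h v') = {}"
      using uv uv' disj less_6 inj by (intro k6_segments_disjoint) (auto dest: inj_onD)
    with assms(4) cr show False by auto
  qed
  then show "{h ` e, h ` f} \<in> k6_crossings"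
    using uv(4) uv'(4) by simp
qed

lemma edge_crossed_once:
  assumes efg: "e \<in> E" "f \<in> E" "g \<in> E" "e \<noteq> f" "e \<noteq> g"
    and xy: "x \<in> cr V (k6_point \<circ> h) (k6_path h) e f" "y \<in> cr V (k6_point \<circ> h) (k6_path h) e g"
  shows "f = g \<and> x = y"
proof -
  have ef: "{h ` e, h ` f} \<in> k6_crossings" and eg: "{h ` e, h ` g} \<in> k6_crossings"
    using crossing_edges(2) efg xy by blast+
  moreover have "{h ` e, h ` f} \<inter> {h ` e, h ` g} \<noteq> {}"
    by simp
  ultimately have "{h ` e, h ` f} = {h ` e, h ` g}"
    by (meson k6_crossings_disjoint)
  moreover have "h ` f \<noteq> h ` e"
    using efg edge_image_eq_iff by blast
  ultimately have "h ` f = h ` g"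
    by (auto simp: doubleton_eq_iff)
  then have "f = g"
    using efg edge_image_eq_iff by blast
  obtain u v where uv: "u \<in> V" "v \<in> V" "u \<noteq> v" "e = {u, v}"
    using efg(1) by (rule edgeE)
  obtain u' v' where uv': "u' \<in> V" "v' \<in> V" "u' \<noteq> v'" "f = {u', v'}"
    using efg(2) by (rule edgeE)
  have "x \<in> k6_segment (h u) (h v) \<inter> k6_segment (h u') (h v')"
      "y \<in> k6_segment (h u) (h v) \<inter> k6_segment (h u') (h v')"
    using xy \<open>f = g\<close> cr_edges [OF uv(1-3) uv'(1-3)] uv(4) uv'(4) by auto
  moreover have "{{h u, h v}, {h u', h v'}} \<in> k6_crossings"
    using ef uv(4) uv'(4) by simp
  ultimately show ?thesis
    using \<open>f = g\<close> k6_segments_cross_once by blast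
qed

lemma one_planar_drawing: "one_planar_drawing V E (k6_point \<circ> h) (k6_path h)"
  unfolding one_planar_drawing_def
  using drawing crossing_edges(1) edge_crossed_once by metis

lemma crossing_bound_2: "crossing_bound V E (k6_point \<circ> h) (k6_path h) 2"
  unfolding crossing_bound_def
proof (intro ballI impI)
  fix e f g k
  assume edges: "e \<in> E" "f \<in> E" "g \<in> E" "k \<in> E"
    and crossings: "e \<noteq> f \<and> g \<noteq> k \<and> cr V (k6_point \<circ> h) (k6_path h) e f \<noteq> {} \<and>
      cr V (k6_point \<circ> h) (k6_path h) g k \<noteq> {} \<and> {e, f} \<noteq> {g, k}"
  have ef: "{h ` e, h ` f} \<in> k6_crossings" and gk: "{h ` g, h ` k} \<in> k6_crossings"
    using crossing_edges(2) edges crossings by blast+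
  have "{h ` e, h ` f} \<noteq> {h ` g, h ` k}"
    using crossings edges edge_image_eq_iff by (auto simp: doubleton_eq_iff)
  then have "card (\<Union>{h ` e, h ` f} \<inter> \<Union>{h ` g, h ` k}) \<le> 2"
    by (rule k6_crossings_share_at_most_2 [OF ef gk])
  moreover have "h ` ((e \<union> f) \<inter> (g \<union> k)) = \<Union>{h ` e, h ` f} \<inter> \<Union>{h ` g, h ` k}"
    using inj_on_image_Int [OF inj] edges edge_subset by (simp add: image_Un)
  moreover have "card (h ` ((e \<union> f) \<inter> (g \<union> k))) = card ((e \<union> f) \<inter> (g \<union> k))"
    using edges edge_subset by (intro card_image inj_on_subset [OF inj]) auto
  ultimately show "card ((e \<union> f) \<inter> (g \<union> k)) \<le> 2"
    by simp
qed

end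

lemma has_drawing_bound_2_if_card_le_6:
  assumes "simple_graph V E" "card V \<le> 6"
  shows "has_drawing_bound V E 2"
proof -
  obtain h where "bij_betw h V {0..<card V}"
    using assms(1) ex_bij_betw_finite_nat unfolding simple_graph_def by blast
  then interpret k6_subdrawing V E h
    using assms by unfold_locales (auto simp: bij_betw_def)
  show ?thesis
    unfolding has_drawing_bound_def using one_planar_drawing crossing_bound_2 by blast
qed

lemma crossings_share_two_vertices:
  assumes "simple_graph V E" "card V \<le> 6" "one_planar_drawing V E p \<gamma>"
    and edges: "e \<in> E" "f \<in> E" "g \<in> E" "k \<in> E"
    and "e \<noteq> f" "cr V p \<gamma> e f \<noteq> {}" "g \<noteq> k" "cr V p \<gamma> g k \<noteq> {}"
  shows "2 \<le> card ((e \<union> f) \<inter> (g \<union> k))"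
proof -
  have "finite V"
    using assms(1) unfolding simple_graph_def by blast
  have edge: "card x = 2 \<and> x \<subseteq> V" if "x \<in> E" for x
    using assms(1) that unfolding simple_graph_def by auto
  then have fin: "finite e" "finite f" "finite g" "finite k"
    using edges \<open>finite V\<close> by (meson finite_subset)+
  have "\<forall>e\<in>E. \<forall>f\<in>E. e \<noteq> f \<and> e \<inter> f \<noteq> {} \<longrightarrow> cr V p \<gamma> e f = {}"
    using assms(3) unfolding one_planar_drawing_def by (elim conjE)
  then have "e \<inter> f = {}" "g \<inter> k = {}"
    using edges assms(8-11) by blast+
  then have "card (e \<union> f) = 4" "card (g \<union> k) = 4"
    using fin edge edges by (simp_all add: card_Un_disjoint)
  moreover have "card (e \<union> f \<union> (g \<union> k)) \<le> card V"
    using edge edges \<open>finite V\<close> by (intro card_mono) auto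
  moreover have "card (e \<union> f) + card (g \<union> k) = card (e \<union> f \<union> (g \<union> k)) + card ((e \<union> f) \<inter> (g \<union> k))"
    using fin by (intro card_Un_Int) auto
  ultimately show ?thesis
    using assms(2) by linarith
qed

lemma has_drawing_bound_1_imp_0:
  assumes "simple_graph V E" "card V \<le> 6" "has_drawing_bound V E 1"
  shows "has_drawing_bound V E 0"
proof -
  obtain p \<gamma> where drawing: "one_planar_drawing V E p \<gamma>" and bound: "crossing_bound V E p \<gamma> 1"
    using assms(3) unfolding has_drawing_bound_def by blast
  have "crossing_bound V E p \<gamma> 0"
    unfolding crossing_bound_def
  proof (intro ballI impI)
    fix e f g k
    assume edges: "e \<in> E" "f \<in> E" "g \<in> E" "k \<in> E"
      and crossings: "e \<noteq> f \<and> g \<noteq> k \<and> cr V p \<gamma> e f \<noteq> {} \<and> cr V p \<gamma> g k \<noteq> {} \<and> {e, f} \<noteq> {g, k}"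
    have "card ((e \<union> f) \<inter> (g \<union> k)) \<le> 1"
      using bound [unfolded crossing_bound_def, rule_format, OF edges crossings] .
    moreover have "2 \<le> card ((e \<union> f) \<inter> (g \<union> k))"
      using crossings by (intro crossings_share_two_vertices [OF assms(1,2) drawing edges]) auto
    ultimately show "card ((e \<union> f) \<inter> (g \<union> k)) \<le> 0"
      by linarith
  qed
  with drawing show ?thesis
    unfolding has_drawing_bound_def by blast
qed

theorem lemma6:
  fixes V :: "'a set" and E :: "'a set set"
  assumes "simple_graph V E" and "one_planar V E" and "card V \<le> 6"
  shows "class_C0 V E \<or> class_C2 V E"
proof (cases "class_C0 V E")
  case False
  have "\<not> class_C1 V E"
    using False has_drawing_bound_1_imp_0 [OF assms(1,3)]
    unfolding class_C0_def class_C1_def by blast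
  with False show ?thesis
    using has_drawing_bound_2_if_card_le_6 [OF assms(1,3)] unfolding class_C2_def by blast
qed simp

end
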